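(* Consider the one-sample model: for $i\in[m]$ and $j\in[n_i]$, $n_i\ge2$, $X_{ij}=\mu_i+\epsilon_{ij}$ with $\mathbb{E}\epsilon_{ij}=0$, $\mathcal{H}_0=\{i:\mu_i=0\}$. Assume that for each $i\in\mathcal{H}_0$ the errors $\{\epsilon_{ij}\}_{j}$ are i.i.d. conditional on the observations of all other units, with a conditional density symmetric about zero. Let $(U_i,U_i^0)$, $i\in[m]$, be constructed by the SENS algorithm (described in the context, with either option), and suppose $U_i\ne U_i^0$ almost surely for all $i$. Then the quantities $e_i=\frac{m\,\mathbb{I}(G_i\ge\tau)}{1+\sum_{j=1}^m\mathbb{I}(G_j\le-\tau)}$ satisfy $\mathbb{E}\big(\sum_{i\in\mathcal{H}_0}e_i\big)\le m$, and the SENS algorithm controls the false discovery rate at level $\alpha$, i.e. $\mathbb{E}\big[|\mathcal{R}\cap\mathcal{H}_0|/\max\{|\mathcal{R}|,1\}\big]\le\alpha$.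
   Context: SENS algorithm (input: the data, $\alpha\in(0,1)$, option JC or KN). (1) For each $i$, randomly (independently of the data) split $[n_i]$ into $\mathcal{N}_{i1},\mathcal{N}_{i2}$ of sizes $n_{i1}=\lceil n_i/2\rceil$, $n_{i2}=n_i-n_{i1}$; with $\bar X_{ik},S^2_{ik}$ the sample mean and variance over $\mathcal{N}_{ik}$, set $V_i=\bar X_{i1}+\bar X_{i2}$, $V^0_i=\bar X_{i1}-\bar X_{i2}$, and for $n_i\ge4$, $S_i=\sqrt{\frac{n_i}{n_{i1}n_{i2}}\frac{(n_{i1}-1)S^2_{i1}+(n_{i2}-1)S^2_{i2}}{n_i-2}}$, $T_i=\Phi^{-1}\{G_{t,n_i-2}(V_i/S_i)\}$, $T^0_i=\Phi^{-1}\{G_{t,n_i-2}(V^0_i/S_i)\}$ ($\Phi$ the normal CDF, $G_{t,\nu}$ the $t_\nu$ CDF); for $n_i=3$ use $S_{i1}$ in place of $S_i$; for $n_i=2$, $T_i=(X_{i1}+X_{i2})/\sqrt2$, $T_i^0=(X_{i1}-X_{i2})/\sqrt2$. (2) $\hat f_{mix}(t)=\frac1{2m}\sum_i[K_{h}(t-T_i)+K_h(t-T^0_i)]$ with $K_h(t)=h^{-1}K(t/h)$, $K$ a symmetric kernel with $\int K=1,\int tK=0,\int t^2K<\infty$, and bandwidth $h$ invariant under permutations of the $2m$ values $(T_1,\dots,T_m,T_1^0,\dots,T_m^0)$. (3) Option KN: $\tilde T^0_i=T_i$ if $|T_i|\le|T^0_i|$, else $T^0_i$; $\hat f_0(t)=\frac1{2m}[\sum_iK_{h_0}(t-\tilde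 T^0_i)+\sum_iK_{h_0}(t+\tilde T^0_i)]$ with $h_0$ permutation invariant in $(\tilde{\mathbf{T}}^0,-\tilde{\mathbf{T}}^0)$. Option JC: with the pooled sample $(X_1,\dots,X_{2m})=(\mathbf{T},\mathbf{T}^0)$, $\varphi(s)=\frac1{2m}\sum_je^{\mathrm{i}sX_j}$, fixed $\gamma\in(0,1/2)$, $\hat s=\inf\{s\in[0,\log 2m]:|\varphi(s)|=(2m)^{-\gamma}\}$, $\hat\sigma_0^2=-\frac{(d/ds)|\varphi(s)|}{s|\varphi(s)|}$ and $\hat\mu_0=\frac{\mathrm{Re}\varphi\,\mathrm{Im}\varphi'-\mathrm{Re}\varphi'\,\mathrm{Im}\varphi}{|\varphi|^2}$ evaluated at $s=\hat s$; $\hat f_0$ is the $\mathcal N(\hat\mu_0,\hat\sigma_0^2)$ density. (4) $g=\hat f_0/\hat f_{mix}$, $U_i=g(T_i)$, $U^0_i=g(T^0_i)$. (5) $G_i=\mathrm{sign}(U^0_i-U_i)[\exp(-U_i)\vee\exp(-U^0_i)]$. (6) $\tau=\inf\{\lambda\in\{|G_i|\}:\frac{1+\sum_i\mathbb{I}(G_i\le-\lambda)}{\sum_i\mathbb{I}(G_i\ge\lambda)}\le\alpha\}$ ($\infty$ if empty). (7) Output $\mathcal{R}=\{i:G_i\ge\tau\}$. *)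

theory Defs
  imports "HOL-Probability.Probability"
begin

definition t_density :: "real \<Rightarrow> real \<Rightarrow> real" where
  "t_density \<nu> x = Gamma ((\<nu> + 1) / 2) / (sqrt (\<nu> * pi) * Gamma (\<nu> / 2))
                     * (1 + x\<^sup>2 / \<nu>) powr (- (\<nu> + 1) / 2)"

definition t_cdf :: "real \<Rightarrow> real \<Rightarrow> real" where
  "t_cdf \<nu> x = (\<integral>y. indicator {..x} y * t_density \<nu> y \<partial>lborel)"

definition Phi :: "real \<Rightarrow> real" where
  "Phi x = (\<integral>y. indicator {..x} y * std_normal_density y \<partial>lborel)"

definition Phi_inv :: "real \<Rightarrow> real" where
  "Phi_inv p = (THE x. Phi x = p)"

section \<open>Step 1: per-unit statistics\<close>

text \<open>Data: \<open>x (i,j)\<close> is observation \<open>j < n i\<close> of unit \<open>i < m\<close> (0-indexed).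
  Split: \<open>s i \<subseteq> {..<n i}\<close> is \<open>N_i1\<close>, its complement in \<open>{..<n i}\<close> is \<open>N_i2\<close>.\<close>

definition smean :: "(nat \<times> nat \<Rightarrow> real) \<Rightarrow> nat \<Rightarrow> nat set \<Rightarrow> real" where
  "smean x i A = (\<Sum>j\<in>A. x (i, j)) / real (card A)"

definition svar :: "(nat \<times> nat \<Rightarrow> real) \<Rightarrow> nat \<Rightarrow> nat set \<Rightarrow> real" where
  "svar x i A = (\<Sum>j\<in>A. (x (i, j) - smean x i A)\<^sup>2) / (real (card A) - 1)"

definition grp2 :: "(nat \<Rightarrow> nat) \<Rightarrow> (nat \<Rightarrow> nat set) \<Rightarrow> nat \<Rightarrow> nat set" where
  "grp2 n s i = {..<n i} - s i"

definition Vstat :: "(nat \<Rightarrow> nat) \<Rightarrow> (nat \<times> nat \<Rightarrow> real) \<Rightarrow> (nat \<Rightarrow> nat set) \<Rightarrow> nat \<Rightarrow> real" where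
  "Vstat n x s i = smean x i (s i) + smean x i (grp2 n s i)"

definition V0stat :: "(nat \<Rightarrow> nat) \<Rightarrow> (nat \<times> nat \<Rightarrow> real) \<Rightarrow> (nat \<Rightarrow> nat set) \<Rightarrow> nat \<Rightarrow> real" where
  "V0stat n x s i = smean x i (s i) - smean x i (grp2 n s i)"

definition Sstat :: "(nat \<Rightarrow> nat) \<Rightarrow> (nat \<times> nat \<Rightarrow> real) \<Rightarrow> (nat \<Rightarrow> nat set) \<Rightarrow> nat \<Rightarrow> real" where
  "Sstat n x s i =
     (let n1 = real (card (s i)); n2 = real (card (grp2 n s i)); N = real (n i) in
      if n i \<ge> 4 then
        sqrt (N / (n1 * n2) * (((n1 - 1) * svar x i (s i) + (n2 - 1) * svar x i (grp2 n s i)) / (N - 2)))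
      else sqrt (svar x i (s i)))"

definition Tstat :: "(nat \<Rightarrow> nat) \<Rightarrow> (nat \<times> nat \<Rightarrow> real) \<Rightarrow> (nat \<Rightarrow> nat set) \<Rightarrow> nat \<Rightarrow> real" where
  "Tstat n x s i =
     (if n i = 2 then (x (i, 0) + x (i, 1)) / sqrt 2
      else Phi_inv (t_cdf (real (n i) - 2) (Vstat n x s i / Sstat n x s i)))"

definition T0stat :: "(nat \<Rightarrow> nat) \<Rightarrow> (nat \<times> nat \<Rightarrow> real) \<Rightarrow> (nat \<Rightarrow> nat set) \<Rightarrow> nat \<Rightarrow> real" where
  "T0stat n x s i =
     (if n i = 2 then (x (i, 0) - x (i, 1)) / sqrt 2
      else Phi_inv (t_cdf (real (n i) - 2) (V0stat n x s i / Sstat n x s i)))"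

section \<open>Step 2: mixture density estimate\<close>

definition pooled :: "nat \<Rightarrow> (nat \<Rightarrow> real) \<Rightarrow> (nat \<Rightarrow> real) \<Rightarrow> nat \<Rightarrow> real" where
  "pooled m a b = restrict (\<lambda>k. if k < m then a k else b (k - m)) {..<2*m}"

definition Kh :: "(real \<Rightarrow> real) \<Rightarrow> real \<Rightarrow> real \<Rightarrow> real" where
  "Kh K h t = K (t / h) / h"

definition fmix_hat :: "(real \<Rightarrow> real) \<Rightarrow> ((nat \<Rightarrow> real) \<Rightarrow> real) \<Rightarrow> nat
                        \<Rightarrow> (nat \<Rightarrow> real) \<Rightarrow> (nat \<Rightarrow> real) \<Rightarrow> real \<Rightarrow> real" where
  "fmix_hat K hsel m T T0 t =
     (let h = hsel (pooled m T T0) in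
      (\<Sum>i<m. Kh K h (t - T i) + Kh K h (t - T0 i)) / (2 * real m))"

section \<open>Step 3: null density estimate\<close>

datatype sens_option = JC | KN

definition Ttil :: "(nat \<Rightarrow> real) \<Rightarrow> (nat \<Rightarrow> real) \<Rightarrow> nat \<Rightarrow> real" where
  "Ttil T T0 i = (if \<bar>T i\<bar> \<le> \<bar>T0 i\<bar> then T i else T0 i)"

definition f0_KN :: "(real \<Rightarrow> real) \<Rightarrow> ((nat \<Rightarrow> real) \<Rightarrow> real) \<Rightarrow> nat
                     \<Rightarrow> (nat \<Rightarrow> real) \<Rightarrow> (nat \<Rightarrow> real) \<Rightarrow> real \<Rightarrow> real" where
  "f0_KN K h0sel m T T0 t =
     (let R = Ttil T T0; h0 = h0sel (pooled m R (\<lambda>i. - R i)) in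
      ((\<Sum>i<m. Kh K h0 (t - R i)) + (\<Sum>i<m. Kh K h0 (t + R i))) / (2 * real m))"

definition emp_cf :: "nat \<Rightarrow> (nat \<Rightarrow> real) \<Rightarrow> real \<Rightarrow> complex" where
  "emp_cf N w s = (\<Sum>k<N. exp (\<i> * complex_of_real (s * w k))) / of_nat N"

definition f0_JC :: "real \<Rightarrow> nat \<Rightarrow> (nat \<Rightarrow> real) \<Rightarrow> (nat \<Rightarrow> real) \<Rightarrow> real \<Rightarrow> real" where
  "f0_JC \<gamma> m T T0 t =
     (let N = 2 * m; w = pooled m T T0; \<phi> = emp_cf N w;
          sh = Inf {s \<in> {0..ln (real N)}. cmod (\<phi> s) = real N powr (- \<gamma>)};
          \<phi>1 = \<phi> sh; \<phi>d = vector_derivative \<phi> (at sh);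
          sig2 = - deriv (\<lambda>s. cmod (\<phi> s)) sh / (sh * cmod \<phi>1);
          mu = (Re \<phi>1 * Im \<phi>d - Re \<phi>d * Im \<phi>1) / (cmod \<phi>1)\<^sup>2
      in normal_density mu (sqrt sig2) t)"

definition f0_hat :: "sens_option \<Rightarrow> (real \<Rightarrow> real) \<Rightarrow> ((nat \<Rightarrow> real) \<Rightarrow> real) \<Rightarrow> real \<Rightarrow> nat
                      \<Rightarrow> (nat \<Rightarrow> real) \<Rightarrow> (nat \<Rightarrow> real) \<Rightarrow> real \<Rightarrow> real" where
  "f0_hat opt K h0sel \<gamma> m T T0 =
     (case opt of KN \<Rightarrow> f0_KN K h0sel m T T0 | JC \<Rightarrow> f0_JC \<gamma> m T T0)"

section \<open>Steps 4--7\<close>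

text \<open>The random input is \<open>\<omega> = (x, s)\<close>: data and split.\<close>

definition SENS_g :: "sens_option \<Rightarrow> (real \<Rightarrow> real) \<Rightarrow> ((nat \<Rightarrow> real) \<Rightarrow> real) \<Rightarrow> ((nat \<Rightarrow> real) \<Rightarrow> real)
                      \<Rightarrow> real \<Rightarrow> (nat \<Rightarrow> nat) \<Rightarrow> nat \<Rightarrow> (nat \<times> nat \<Rightarrow> real) \<times> (nat \<Rightarrow> nat set) \<Rightarrow> real \<Rightarrow> real" where
  "SENS_g opt K hsel h0sel \<gamma> n m \<omega> t =
     (let T = Tstat n (fst \<omega>) (snd \<omega>); T0 = T0stat n (fst \<omega>) (snd \<omega>) in
      f0_hat opt K h0sel \<gamma> m T T0 t / fmix_hat K hsel m T T0 t)"

definition SENS_U :: "sens_option \<Rightarrow> (real \<Rightarrow> real) \<Rightarrow> ((nat \<Rightarrow> real) \<Rightarrow> real) \<Rightarrow> ((nat \<Rightarrow> real) \<Rightarrow> real)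
                      \<Rightarrow> real \<Rightarrow> (nat \<Rightarrow> nat) \<Rightarrow> nat \<Rightarrow> (nat \<times> nat \<Rightarrow> real) \<times> (nat \<Rightarrow> nat set) \<Rightarrow> nat \<Rightarrow> real" where
  "SENS_U opt K hsel h0sel \<gamma> n m \<omega> i =
     SENS_g opt K hsel h0sel \<gamma> n m \<omega> (Tstat n (fst \<omega>) (snd \<omega>) i)"

definition SENS_U0 :: "sens_option \<Rightarrow> (real \<Rightarrow> real) \<Rightarrow> ((nat \<Rightarrow> real) \<Rightarrow> real) \<Rightarrow> ((nat \<Rightarrow> real) \<Rightarrow> real)
                      \<Rightarrow> real \<Rightarrow> (nat \<Rightarrow> nat) \<Rightarrow> nat \<Rightarrow> (nat \<times> nat \<Rightarrow> real) \<times> (nat \<Rightarrow> nat set) \<Rightarrow> nat \<Rightarrow> real" where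
  "SENS_U0 opt K hsel h0sel \<gamma> n m \<omega> i =
     SENS_g opt K hsel h0sel \<gamma> n m \<omega> (T0stat n (fst \<omega>) (snd \<omega>) i)"

definition SENS_G :: "sens_option \<Rightarrow> (real \<Rightarrow> real) \<Rightarrow> ((nat \<Rightarrow> real) \<Rightarrow> real) \<Rightarrow> ((nat \<Rightarrow> real) \<Rightarrow> real)
                      \<Rightarrow> real \<Rightarrow> (nat \<Rightarrow> nat) \<Rightarrow> nat \<Rightarrow> (nat \<times> nat \<Rightarrow> real) \<times> (nat \<Rightarrow> nat set) \<Rightarrow> nat \<Rightarrow> real" where
  "SENS_G opt K hsel h0sel \<gamma> n m \<omega> i =
     (let U = SENS_U opt K hsel h0sel \<gamma> n m \<omega> i; U0 = SENS_U0 opt K hsel h0sel \<gamma> n m \<omega> i in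
      sgn (U0 - U) * max (exp (- U)) (exp (- U0)))"

text \<open>The condition
  \<open>(1 + #{G_i \<le> -\<lambda>}) / #{G_i \<ge> \<lambda>} \<le> \<alpha>\<close> is written multiplicatively, which avoids the
  HOL convention \<open>x / 0 = 0\<close> (a zero denominator makes the ratio \<open>+\<infinity>\<close>, i.e. the condition false).\<close>
definition sens_tau :: "real \<Rightarrow> nat \<Rightarrow> (nat \<Rightarrow> real) \<Rightarrow> ereal" where
  "sens_tau \<alpha> m G =
     (let C = {l \<in> (\<lambda>i. \<bar>G i\<bar>) ` {..<m}.
                 1 + real (card {i \<in> {..<m}. G i \<le> - l}) \<le> \<alpha> * real (card {i \<in> {..<m}. G i \<ge> l})}
      in if C = {} then \<infinity> else ereal (Min C))"

definition sens_rej :: "real \<Rightarrow> nat \<Rightarrow> (nat \<Rightarrow> real) \<Rightarrow> nat set" where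
  "sens_rej \<alpha> m G = {i \<in> {..<m}. ereal (G i) \<ge> sens_tau \<alpha> m G}"

definition sens_e :: "real \<Rightarrow> nat \<Rightarrow> (nat \<Rightarrow> real) \<Rightarrow> nat \<Rightarrow> real" where
  "sens_e \<alpha> m G i =
     real m * (if ereal (G i) \<ge> sens_tau \<alpha> m G then 1 else 0)
       / (1 + real (card {j \<in> {..<m}. ereal (G j) \<le> - sens_tau \<alpha> m G}))"

definition FDP :: "nat set \<Rightarrow> nat set \<Rightarrow> real" where
  "FDP R H0 = real (card (R \<inter> H0)) / real (max (card R) 1)"

definition obs_idx :: "nat \<Rightarrow> (nat \<Rightarrow> nat) \<Rightarrow> (nat \<times> nat) set" where
  "obs_idx m n = {(i, j). i < m \<and> j < n i}"

definition other_idx :: "nat \<Rightarrow> (nat \<Rightarrow> nat) \<Rightarrow> nat \<Rightarrow> (nat \<times> nat) set" where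
  "other_idx m n i = {(k, j). k < m \<and> j < n k \<and> k \<noteq> i}"

definition combine :: "(nat \<Rightarrow> nat) \<Rightarrow> nat \<Rightarrow> (nat \<times> nat \<Rightarrow> real) \<Rightarrow> (nat \<Rightarrow> real) \<Rightarrow> nat \<times> nat \<Rightarrow> real" where
  "combine n i y z = (\<lambda>(k, j). if k = i \<and> j < n i then z j else y (k, j))"

end

theory Submission
  imports Defs
begin

(* Fix the magnitudes |G_i| and consider the 2^|H_0| ways of flipping the signs of the null
  statistics. For a null unit, negating its second half-sample (its second observation if n_i = 2)
  preserves the law of the data, by the conditional symmetry of its errors given the other units,
  and swaps T_i with T0_i; since the density estimates are invariant under permutations of the
  pooled sample, this flips exactly the sign of G_i. So each expectation equals its average over
  all sign flips of the null units. For fixed magnitudes, the sum of the null e-values and the FDP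
  are at most m, resp. alpha, times #{null i. G_i >= tau} / (1 + #{null i. G_i <= -tau}), and the
  sum of this ratio over all sign patterns is at most 2^|H_0|. *)

section \<open>Sign patterns and data-dependent thresholds\<close>

definition count_ge :: "'i set \<Rightarrow> ('i \<Rightarrow> real) \<Rightarrow> real \<Rightarrow> nat" where
  "count_ge S a l = card {i \<in> S. l \<le> a i}"

definition admissible_thresholds ::
    "'i set \<Rightarrow> ('i \<Rightarrow> real) \<Rightarrow> real set \<Rightarrow> (real \<Rightarrow> nat \<Rightarrow> nat \<Rightarrow> bool) \<Rightarrow> 'i set \<Rightarrow> real set" where
  "admissible_thresholds H a L c S = {l \<in> L. c l (count_ge S a l) (count_ge (H - S) a l)}"

text \<open>\<open>S \<subseteq> H\<close> is the set of units with positive sign and \<open>a\<close> gives the magnitudes; the threshold is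
  the least \<open>l \<in> L\<close> that \<open>c\<close> accepts, given the numbers of positive and of negative units of
  magnitude at least \<open>l\<close>.\<close>
definition threshold_ratio ::
    "'i set \<Rightarrow> ('i \<Rightarrow> real) \<Rightarrow> real set \<Rightarrow> (real \<Rightarrow> nat \<Rightarrow> nat \<Rightarrow> bool) \<Rightarrow> 'i set \<Rightarrow> real" where
  "threshold_ratio H a L c S =
     (let C = admissible_thresholds H a L c S in
      if C = {} then 0
      else real (count_ge S a (Min C)) / (1 + real (count_ge (H - S) a (Min C))))"

lemma threshold_ratio_empty: "threshold_ratio H a L c {} = 0"
  by (simp add: threshold_ratio_def Let_def count_ge_def)

lemma binomial_Suc_ratio_le:
  "real (N choose Suc q) * real (Suc q) / (1 + real (N - Suc q)) \<le> real (N choose q)"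
proof (cases "q < N")
  case True
  have "(N choose Suc q) * Suc q = (N choose q) * (N - q)"
    by (metis binomial_absorb_comp mult.commute times_binomial_minus1_eq zero_less_Suc diff_Suc_1)
  also have "N - q = 1 + (N - Suc q)" using True by simp
  finally have "real (N choose Suc q) * real (Suc q) = real (N choose q) * (1 + real (N - Suc q))"
    by (metis of_nat_1 of_nat_add of_nat_mult)
  then show ?thesis by simp
qed (simp add: binomial_eq_0)

lemma sum_subsets_card_insert:
  assumes "finite A" "x \<notin> A"
  shows "(\<Sum>S | S \<subseteq> insert x A \<and> card S = Suc q. f S)
       = (\<Sum>S | S \<subseteq> A \<and> card S = Suc q. f S) + (\<Sum>S | S \<subseteq> A \<and> card S = q. f (insert x S))"
proof -
  have split: "{S. S \<subseteq> insert x A \<and> card S = Suc q}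
      = {S. S \<subseteq> A \<and> card S = Suc q} \<union> insert x ` {S. S \<subseteq> A \<and> card S = q}"
  proof (intro set_eqI iffI)
    fix S assume S: "S \<in> {S. S \<subseteq> insert x A \<and> card S = Suc q}"
    show "S \<in> {S. S \<subseteq> A \<and> card S = Suc q} \<union> insert x ` {S. S \<subseteq> A \<and> card S = q}"
    proof (cases "x \<in> S")
      case True
      then have "S = insert x (S - {x})" "S - {x} \<subseteq> A" "card (S - {x}) = q"
        using S by auto
      then show ?thesis by blast
    qed (use S in auto)
  next
    fix S assume "S \<in> {S. S \<subseteq> A \<and> card S = Suc q} \<union> insert x ` {S. S \<subseteq> A \<and> card S = q}"
    then show "S \<in> {S. S \<subseteq> insert x A \<and> card S = Suc q}"
    proof
      assume "S \<in> insert x ` {S. S \<subseteq> A \<and> card S = q}"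
      then obtain T where T: "T \<subseteq> A" "card T = q" "S = insert x T" by auto
      moreover have "finite T" "x \<notin> T" using T assms finite_subset by auto
      ultimately show ?thesis by auto
    qed auto
  qed
  have inj: "inj_on (insert x) {S. S \<subseteq> A \<and> card S = q}"
  proof (rule inj_onI)
    fix X Y assume "X \<in> {S. S \<subseteq> A \<and> card S = q}" "Y \<in> {S. S \<subseteq> A \<and> card S = q}"
      and "insert x X = insert x Y"
    moreover have "x \<notin> X" "x \<notin> Y" using calculation assms(2) by auto
    ultimately show "X = Y" by (metis Diff_insert_absorb)
  qed
  have disj: "{S. S \<subseteq> A \<and> card S = Suc q} \<inter> insert x ` {S. S \<subseteq> A \<and> card S = q} = {}"
    using assms(2) by auto
  have fin: "finite {S. S \<subseteq> A \<and> card S = k}" for k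
    using assms(1) by simp
  show ?thesis
    unfolding split sum.union_disjoint[OF fin finite_imageI[OF fin] disj] sum.reindex[OF inj]
    by (simp add: comp_def)
qed

lemma count_ge_below_min:
  assumes "finite H" "S \<subseteq> H" "\<forall>i\<in>H. l \<le> a i"
  shows "count_ge S a l = card S" "count_ge (H - S) a l = card H - card S"
proof -
  have "{i \<in> S. l \<le> a i} = S" "{i \<in> H - S. l \<le> a i} = H - S" using assms(2,3) by auto
  then show "count_ge S a l = card S" "count_ge (H - S) a l = card H - card S"
    using assms(1,2) by (simp_all add: count_ge_def card_Diff_subset finite_subset[OF assms(2,1)])
qed

lemma count_ge_Diff_below: "a x < l \<Longrightarrow> count_ge (S - {x}) a l = count_ge S a l"
  unfolding count_ge_def by (rule arg_cong[where f = card]) auto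

lemma threshold_ratio_admissible_below_min:
  assumes "finite H" "finite L" "S \<subseteq> H" "\<forall>i\<in>H. b \<le> a i"
    and "l \<in> L" "l \<le> b" "c l (card S) (card H - card S)"
  shows "threshold_ratio H a L c S = real (card S) / (1 + real (card H - card S))"
proof -
  let ?C = "admissible_thresholds H a L c S"
  have counts: "count_ge S a l' = card S" "count_ge (H - S) a l' = card H - card S" if "l' \<le> b" for l'
    using that assms(1,3,4) by (auto intro!: count_ge_below_min)
  have "l \<in> ?C" using assms(5-7) counts[of l] by (simp add: admissible_thresholds_def)
  moreover have "finite ?C" using assms(2) by (simp add: admissible_thresholds_def)
  ultimately have "?C \<noteq> {}" "Min ?C \<le> b" using assms(6) by (auto intro: order.trans[OF Min_le])
  then show ?thesis by (simp add: threshold_ratio_def counts)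
qed

lemma threshold_ratio_remove_min:
  assumes "finite H" "finite L" "S \<subseteq> H" "\<forall>i\<in>H. a x \<le> a i"
    and "\<forall>l\<in>L. l \<le> a x \<longrightarrow> \<not> c l (card S) (card H - card S)"
  shows "threshold_ratio H a L c S = threshold_ratio (H - {x}) a {l \<in> L. a x < l} c (S - {x})"
proof -
  have "(H - {x}) - (S - {x}) = (H - S) - {x}" by auto
  then have high: "count_ge (S - {x}) a l = count_ge S a l"
      "count_ge ((H - {x}) - (S - {x})) a l = count_ge (H - S) a l" if "a x < l" for l
    using that by (simp_all add: count_ge_Diff_below)
  have low: "l \<notin> admissible_thresholds H a L c S" if "l \<le> a x" for l
  proof -
    have "\<forall>i\<in>H. l \<le> a i" using that assms(4) by (auto intro: order.trans)
    then show ?thesis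
      using count_ge_below_min[OF assms(1,3)] that assms(5) by (auto simp: admissible_thresholds_def)
  qed
  have C: "admissible_thresholds H a L c S = admissible_thresholds (H - {x}) a {l \<in> L. a x < l} c (S - {x})"
  proof (rule set_eqI)
    fix l
    show "l \<in> admissible_thresholds H a L c S
      \<longleftrightarrow> l \<in> admissible_thresholds (H - {x}) a {l \<in> L. a x < l} c (S - {x})"
    proof (cases "l \<le> a x")
      case True
      then show ?thesis using low[OF True] by (simp add: admissible_thresholds_def)
    next
      case False
      then show ?thesis using high[of l] by (simp add: admissible_thresholds_def)
    qed
  qed
  show ?thesis
  proof (cases "admissible_thresholds H a L c S = {}")
    case True
    then show ?thesis using C by (simp add: threshold_ratio_def)
  next
    case False
    define M where "M = Min (admissible_thresholds H a L c S)"
    have "finite (admissible_thresholds H a L c S)" using assms(2) by (simp add: admissible_thresholds_def)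
    then have "M \<in> admissible_thresholds (H - {x}) a {l \<in> L. a x < l} c (S - {x})"
      unfolding M_def C[symmetric] using False by (rule Min_in)
    then have "a x < M" by (simp add: admissible_thresholds_def)
    then show ?thesis
      unfolding threshold_ratio_def Let_def C[symmetric] M_def[symmetric] by (simp add: high)
  qed
qed

lemma sum_threshold_ratio_admissible_below_min:
  assumes "finite H" "finite L" "\<forall>i\<in>H. b \<le> a i"
    and "l \<in> L" "l \<le> b" "c l (Suc q) (card H - Suc q)"
  shows "(\<Sum>S | S \<subseteq> H \<and> card S = Suc q. threshold_ratio H a L c S) \<le> real (card H choose q)"
proof -
  have "threshold_ratio H a L c S = real (Suc q) / (1 + real (card H - Suc q))"
    if "S \<subseteq> H" "card S = Suc q" for S
    using threshold_ratio_admissible_below_min[OF assms(1,2) that(1) assms(3-5)] assms(6) that(2)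
    by simp
  then have "(\<Sum>S | S \<subseteq> H \<and> card S = Suc q. threshold_ratio H a L c S)
      = real (card H choose Suc q) * real (Suc q) / (1 + real (card H - Suc q))"
    by (simp add: n_subsets[OF assms(1)])
  also have "\<dots> \<le> real (card H choose q)"
    by (rule binomial_Suc_ratio_le)
  finally show ?thesis .
qed

lemma sum_threshold_ratio_remove_min:
  assumes "finite H" "finite L" "x \<in> H" "\<forall>i\<in>H. a x \<le> a i"
    and "\<not> (\<exists>l\<in>L. l \<le> a x \<and> c l (Suc q) (card H - Suc q))"
  defines "r \<equiv> threshold_ratio (H - {x}) a {l \<in> L. a x < l} c"
  shows "(\<Sum>S | S \<subseteq> H \<and> card S = Suc q. threshold_ratio H a L c S)
       = (\<Sum>S | S \<subseteq> H - {x} \<and> card S = Suc q. r S) + (\<Sum>S | S \<subseteq> H - {x} \<and> card S = q. r S)"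
proof -
  have "(\<Sum>S | S \<subseteq> H \<and> card S = Suc q. threshold_ratio H a L c S)
      = (\<Sum>S | S \<subseteq> insert x (H - {x}) \<and> card S = Suc q. r (S - {x}))"
    using threshold_ratio_remove_min[OF assms(1,2) _ assms(4)] assms(3,5)
    by (intro sum.cong) (auto simp: r_def insert_absorb)
  also have "\<dots> = (\<Sum>S | S \<subseteq> H - {x} \<and> card S = Suc q. r S) + (\<Sum>S | S \<subseteq> H - {x} \<and> card S = q. r S)"
  proof -
    have "S - {x} = S" "insert x S - {x} = S" if "S \<subseteq> H - {x}" for S
      using that by auto
    then show ?thesis
      using assms(1) by (subst sum_subsets_card_insert) (auto intro!: sum.cong arg_cong2[where f = "(+)"])
  qed
  finally show ?thesis .
qed

text \<open>Induction removing the unit of least magnitude: either some admissible threshold lies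
  below it, and then all \<open>S\<close> of the same size have the same ratio, or that unit is invisible at
  every admissible threshold.\<close>
lemma sum_threshold_ratio_card_Suc:
  assumes "finite H" "finite L"
  shows "(\<Sum>S | S \<subseteq> H \<and> card S = Suc q. threshold_ratio H a L c S) \<le> real (card H choose q)"
  using assms
proof (induction H arbitrary: L q rule: finite_remove_induct)
  case empty
  have no_subsets: "{S. S \<subseteq> {} \<and> card S = Suc q} = {}" by auto
  show ?case unfolding no_subsets by simp
next
  case (remove H)
  have "Min (a ` H) \<in> a ` H" using remove.hyps(1,2) by simp
  then obtain x where "x \<in> H" "a x = Min (a ` H)" by auto
  then have x: "x \<in> H" "\<forall>i\<in>H. a x \<le> a i" using remove.hyps(1) by auto
  let ?H' = "H - {x}" and ?L' = "{l \<in> L. a x < l}"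
  have H: "H = insert x ?H'" "finite ?H'" "card H = Suc (card ?H')"
    using x(1) remove.hyps(1) by (auto simp: card_Suc_Diff1 simp del: card_Diff_insert)
  show ?case
  proof (cases "\<exists>l\<in>L. l \<le> a x \<and> c l (Suc q) (card H - Suc q)")
    case True
    then show ?thesis
      using sum_threshold_ratio_admissible_below_min[OF remove.hyps(1) remove.prems x(2)] by blast
  next
    case False
    let ?r = "threshold_ratio ?H' a ?L' c"
    have "(\<Sum>S | S \<subseteq> H \<and> card S = Suc q. threshold_ratio H a L c S)
        = (\<Sum>S | S \<subseteq> ?H' \<and> card S = Suc q. ?r S) + (\<Sum>S | S \<subseteq> ?H' \<and> card S = q. ?r S)"
      using sum_threshold_ratio_remove_min[OF remove.hyps(1) remove.prems x] False by blast
    also have "\<dots> \<le> real (card ?H' choose q) + (case q of 0 \<Rightarrow> 0 | Suc p \<Rightarrow> real (card ?H' choose p))"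
    proof (rule add_mono)
      show "(\<Sum>S | S \<subseteq> ?H' \<and> card S = Suc q. ?r S) \<le> real (card ?H' choose q)"
        using remove.IH[OF x(1)] remove.prems by simp
      show "(\<Sum>S | S \<subseteq> ?H' \<and> card S = q. ?r S) \<le> (case q of 0 \<Rightarrow> 0 | Suc p \<Rightarrow> real (card ?H' choose p))"
      proof (cases q)
        case 0
        then have "{S. S \<subseteq> ?H' \<and> card S = q} = {{}}" using H(2) by (auto dest: finite_subset)
        then show ?thesis using 0 by (simp add: threshold_ratio_empty)
      qed (use remove.IH[OF x(1)] remove.prems in simp)
    qed
    also have "\<dots> = real (card H choose q)"
      by (cases q) (simp_all add: H(3))
    finally show ?thesis .
  qed
qed

lemma sum_threshold_ratio_Pow_le:
  assumes "finite H" "finite L"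
  shows "(\<Sum>S\<in>Pow H. threshold_ratio H a L c S) \<le> 2 ^ card H"
proof -
  let ?r = "threshold_ratio H a L c"
  have "(\<Sum>S\<in>Pow H. ?r S) = (\<Sum>p\<le>Suc (card H). \<Sum>S | S \<in> Pow H \<and> card S = p. ?r S)"
    using assms(1) by (intro sum.group[symmetric]) (auto simp: card_mono le_SucI)
  also have "\<dots> = ?r {} + (\<Sum>q\<le>card H. \<Sum>S | S \<subseteq> H \<and> card S = Suc q. ?r S)"
  proof -
    have "{S. S \<in> Pow H \<and> card S = 0} = {{}}" using assms(1) by (auto dest: finite_subset)
    then show ?thesis unfolding sum.atMost_Suc_shift by simp
  qed
  also have "\<dots> \<le> 0 + (\<Sum>q\<le>card H. real (card H choose q))"
    using sum_threshold_ratio_card_Suc[OF assms]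
    by (intro add_mono sum_mono) (simp_all add: threshold_ratio_empty)
  also have "\<dots> = 2 ^ card H"
    by (simp flip: of_nat_sum add: choose_row_sum)
  finally show ?thesis .
qed

section \<open>The SENS threshold\<close>

text \<open>For \<open>G\<close> without zeros, \<open>sens_tau\<close> is the least admissible magnitude when the counts of the
  non-null units are built into the stopping rule and the null units are split by sign; then
  \<open>null_ratio\<close> is \<open>#{i \<in> H. G i \<ge> \<tau>} / (1 + #{i \<in> H. G i \<le> -\<tau>})\<close>.\<close>
definition sens_admissible :: "real \<Rightarrow> nat \<Rightarrow> nat set \<Rightarrow> (nat \<Rightarrow> real) \<Rightarrow> real \<Rightarrow> nat \<Rightarrow> nat \<Rightarrow> bool" where
  "sens_admissible \<alpha> m H G l v_pos v_neg \<longleftrightarrow>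
     1 + real (card {j \<in> {..<m} - H. G j \<le> - l} + v_neg) \<le> \<alpha> * real (card {j \<in> {..<m} - H. l \<le> G j} + v_pos)"

definition null_ratio :: "real \<Rightarrow> nat \<Rightarrow> nat set \<Rightarrow> (nat \<Rightarrow> real) \<Rightarrow> real" where
  "null_ratio \<alpha> m H G =
     threshold_ratio H (\<lambda>i. \<bar>G i\<bar>) ((\<lambda>i. \<bar>G i\<bar>) ` {..<m}) (sens_admissible \<alpha> m H G) {i \<in> H. 0 < G i}"

lemma card_tails_split:
  fixes m :: nat and G :: "nat \<Rightarrow> real"
  assumes "H \<subseteq> {..<m}" "0 < l"
  shows "card {i \<in> {..<m}. G i \<le> - l}
           = card {j \<in> {..<m} - H. G j \<le> - l} + count_ge (H - {i \<in> H. 0 < G i}) (\<lambda>i. \<bar>G i\<bar>) l"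
      (is ?neg)
    and "card {i \<in> {..<m}. l \<le> G i}
           = card {j \<in> {..<m} - H. l \<le> G j} + count_ge {i \<in> H. 0 < G i} (\<lambda>i. \<bar>G i\<bar>) l"
      (is ?pos)
proof -
  have "{i \<in> {..<m}. G i \<le> - l}
      = {j \<in> {..<m} - H. G j \<le> - l} \<union> {i \<in> H - {i \<in> H. 0 < G i}. l \<le> \<bar>G i\<bar>}"
    "{i \<in> {..<m}. l \<le> G i} = {j \<in> {..<m} - H. l \<le> G j} \<union> {i \<in> {i \<in> H. 0 < G i}. l \<le> \<bar>G i\<bar>}"
    using assms by auto
  moreover have "finite {i \<in> A. P i}" if "A \<subseteq> {..<m}" for A P
    using finite_subset[OF that finite_lessThan] by simp
  ultimately show ?neg ?pos
    using assms(1) unfolding count_ge_def by (auto intro!: card_Un_disjoint)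
qed

lemma sens_tau_cases:
  fixes m :: nat and G :: "nat \<Rightarrow> real"
  assumes H: "H \<subseteq> {..<m}" and nz: "\<forall>i<m. G i \<noteq> 0"
  obtains (no_threshold) "sens_tau \<alpha> m G = \<infinity>" "null_ratio \<alpha> m H G = 0"
  | (threshold) l where "sens_tau \<alpha> m G = ereal l" "0 < l"
      "1 + real (card {i \<in> {..<m}. G i \<le> - l}) \<le> \<alpha> * real (card {i \<in> {..<m}. l \<le> G i})"
      "null_ratio \<alpha> m H G = real (count_ge {i \<in> H. 0 < G i} (\<lambda>i. \<bar>G i\<bar>) l)
          / (1 + real (count_ge (H - {i \<in> H. 0 < G i}) (\<lambda>i. \<bar>G i\<bar>) l))"
proof -
  let ?L = "(\<lambda>i. \<bar>G i\<bar>) ` {..<m}"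
  let ?C = "admissible_thresholds H (\<lambda>i. \<bar>G i\<bar>) ?L (sens_admissible \<alpha> m H G) {i \<in> H. 0 < G i}"
  have pos: "0 < l" if "l \<in> ?L" for l
    using that nz by auto
  have "?C = {l \<in> ?L. 1 + real (card {i \<in> {..<m}. G i \<le> - l}) \<le> \<alpha> * real (card {i \<in> {..<m}. G i \<ge> l})}"
    unfolding admissible_thresholds_def sens_admissible_def
    using card_tails_split[OF H pos] by (intro Collect_cong conj_cong refl) auto
  then have tau: "sens_tau \<alpha> m G = (if ?C = {} then \<infinity> else ereal (Min ?C))"
    by (simp add: sens_tau_def)
  show thesis
  proof (cases "?C = {}")
    case True
    then show thesis
      using tau by (intro no_threshold) (simp_all add: null_ratio_def threshold_ratio_def)
  next
    case False
    have "finite ?C" by (simp add: admissible_thresholds_def)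
    then have "Min ?C \<in> ?C" using False by (rule Min_in)
    with \<open>?C = _\<close> have "Min ?C \<in> ?L"
        "1 + real (card {i \<in> {..<m}. G i \<le> - Min ?C}) \<le> \<alpha> * real (card {i \<in> {..<m}. Min ?C \<le> G i})"
      by auto
    then show thesis
      using tau False pos by (intro threshold[of "Min ?C"]) (simp_all add: null_ratio_def threshold_ratio_def Let_def)
  qed
qed

lemma sum_sens_e_le_null_ratio:
  fixes m :: nat and G :: "nat \<Rightarrow> real"
  assumes H: "H \<subseteq> {..<m}" and nz: "\<forall>i<m. G i \<noteq> 0"
  shows "(\<Sum>i\<in>H. sens_e \<alpha> m G i) \<le> real m * null_ratio \<alpha> m H G"
  using H nz
proof (cases rule: sens_tau_cases[where \<alpha> = \<alpha>])
  case no_threshold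
  then show ?thesis by (simp add: sens_e_def)
next
  case (threshold l)
  let ?P = "{i \<in> H. 0 < G i}"
  have fin: "finite H" using H finite_subset by blast
  define N where "N = real (card {i \<in> {..<m}. G i \<le> - l})"
  have "(\<Sum>i\<in>H. sens_e \<alpha> m G i) = (\<Sum>i\<in>H. real m / (1 + N) * of_bool (l \<le> G i))"
    using threshold(1) by (intro sum.cong) (simp_all add: sens_e_def N_def)
  also have "\<dots> = real m / (1 + N) * (\<Sum>i\<in>H. of_bool (l \<le> G i))"
    by (rule sum_distrib_left[symmetric])
  also have "(\<Sum>i\<in>H. of_bool (l \<le> G i)) = real (card (H \<inter> {i. l \<le> G i}))"
    using fin by simp
  also have "H \<inter> {i. l \<le> G i} = {i \<in> ?P. l \<le> \<bar>G i\<bar>}" using \<open>0 < l\<close> by auto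
  finally have "(\<Sum>i\<in>H. sens_e \<alpha> m G i)
      = real m * real (count_ge ?P (\<lambda>i. \<bar>G i\<bar>) l) / (1 + real (card {i \<in> {..<m}. G i \<le> - l}))"
    by (simp add: count_ge_def N_def)
  also have "\<dots> \<le> real m * real (count_ge ?P (\<lambda>i. \<bar>G i\<bar>) l)
                    / (1 + real (count_ge (H - ?P) (\<lambda>i. \<bar>G i\<bar>) l))"
    using card_tails_split(1)[OF H \<open>0 < l\<close>] by (intro divide_left_mono) auto
  finally show ?thesis using threshold(4) by simp
qed

lemma FDP_le_null_ratio:
  fixes m :: nat and G :: "nat \<Rightarrow> real"
  assumes H: "H \<subseteq> {..<m}" and nz: "\<forall>i<m. G i \<noteq> 0" and \<alpha>: "0 \<le> \<alpha>"
  shows "FDP (sens_rej \<alpha> m G) H \<le> \<alpha> * null_ratio \<alpha> m H G"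
  using H nz
proof (cases rule: sens_tau_cases[where \<alpha> = \<alpha>])
  case no_threshold
  then show ?thesis by (simp add: sens_rej_def FDP_def)
next
  case (threshold l)
  let ?P = "{i \<in> H. 0 < G i}"
  let ?V = "real (count_ge ?P (\<lambda>i. \<bar>G i\<bar>) l)"
  let ?R = "real (card {i \<in> {..<m}. l \<le> G i})"
  have rej: "sens_rej \<alpha> m G = {i \<in> {..<m}. l \<le> G i}"
    using threshold(1) by (simp add: sens_rej_def)
  have "sens_rej \<alpha> m G \<inter> H = {i \<in> ?P. l \<le> \<bar>G i\<bar>}"
    using H \<open>0 < l\<close> by (auto simp: rej)
  then have V: "real (card (sens_rej \<alpha> m G \<inter> H)) = ?V" by (simp add: count_ge_def)
  have "0 < \<alpha> * ?R" using threshold(3) of_nat_0_le_iff[of "card {i \<in> {..<m}. G i \<le> - l}"] by linarith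
  then have "0 < ?R" by (simp add: zero_less_mult_iff)
  then have "max (card (sens_rej \<alpha> m G)) 1 = card {i \<in> {..<m}. l \<le> G i}"
    unfolding rej by linarith
  then have "FDP (sens_rej \<alpha> m G) H = ?V / ?R"
    by (simp only: FDP_def V)
  also have "\<dots> \<le> \<alpha> * ?V / (1 + real (card {i \<in> {..<m}. G i \<le> - l}))"
  proof -
    have "?V * (1 + real (card {i \<in> {..<m}. G i \<le> - l})) \<le> ?V * (\<alpha> * ?R)"
      using threshold(3) by (intro mult_left_mono) auto
    then show ?thesis using \<open>0 < ?R\<close> by (simp add: field_simps)
  qed
  also have "\<dots> \<le> \<alpha> * ?V / (1 + real (count_ge (H - ?P) (\<lambda>i. \<bar>G i\<bar>) l))"
    using card_tails_split(1)[OF H \<open>0 < l\<close>] \<alpha> by (intro divide_left_mono) auto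
  finally show ?thesis using threshold(4) by simp
qed

definition flip_signs :: "'i set \<Rightarrow> ('i \<Rightarrow> real) \<Rightarrow> 'i \<Rightarrow> real" where
  "flip_signs S G j = (if j \<in> S then - G j else G j)"

lemma flip_signs_empty: "flip_signs {} = id"
  by (simp add: flip_signs_def fun_eq_iff)

lemma flip_signs_Un: "A \<inter> B = {} \<Longrightarrow> flip_signs (A \<union> B) = flip_signs A \<circ> flip_signs B"
  by (auto simp: flip_signs_def fun_eq_iff)

lemma null_ratio_flip_signs:
  fixes G :: "nat \<Rightarrow> real"
  assumes "S \<subseteq> H" "H \<subseteq> {..<m}" "\<forall>i<m. G i \<noteq> 0"
  shows "null_ratio \<alpha> m H (flip_signs S G)
       = threshold_ratio H (\<lambda>i. \<bar>G i\<bar>) ((\<lambda>i. \<bar>G i\<bar>) ` {..<m}) (sens_admissible \<alpha> m H G)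
           (sym_diff {i \<in> H. 0 < G i} S)"
proof -
  have abs: "(\<lambda>i. \<bar>flip_signs S G i\<bar>) = (\<lambda>i. \<bar>G i\<bar>)"
    by (auto simp: flip_signs_def)
  have "flip_signs S G j = G j" if "j \<notin> H" for j
    using that assms(1) by (auto simp: flip_signs_def)
  then have outside: "{j \<in> {..<m} - H. flip_signs S G j \<le> - l} = {j \<in> {..<m} - H. G j \<le> - l}"
      "{j \<in> {..<m} - H. l \<le> flip_signs S G j} = {j \<in> {..<m} - H. l \<le> G j}" for l
    by auto
  have adm: "sens_admissible \<alpha> m H (flip_signs S G) = sens_admissible \<alpha> m H G"
    by (intro ext) (simp only: sens_admissible_def outside)
  have "{i \<in> H. 0 < flip_signs S G i} = sym_diff {i \<in> H. 0 < G i} S"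
    using assms by (force simp: flip_signs_def)
  then show ?thesis
    unfolding null_ratio_def abs adm by simp
qed

lemma sum_null_ratio_flip_signs:
  assumes H: "H \<subseteq> {..<m}" and nz: "\<forall>i<m. G i \<noteq> 0"
  shows "(\<Sum>S\<in>Pow H. null_ratio \<alpha> m H (flip_signs S G)) \<le> 2 ^ card H"
proof -
  let ?P = "{i \<in> H. 0 < G i}"
  let ?r = "threshold_ratio H (\<lambda>i. \<bar>G i\<bar>) ((\<lambda>i. \<bar>G i\<bar>) ` {..<m}) (sens_admissible \<alpha> m H G)"
  have "(\<Sum>S\<in>Pow H. null_ratio \<alpha> m H (flip_signs S G)) = (\<Sum>S\<in>Pow H. ?r (sym_diff ?P S))"
    using null_ratio_flip_signs[OF _ H nz] by (intro sum.cong) auto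
  also have "\<dots> = (\<Sum>S\<in>Pow H. ?r S)"
    by (rule sum.reindex_bij_witness[where i = "sym_diff ?P" and j = "sym_diff ?P"]) auto
  also have "\<dots> \<le> 2 ^ card H"
    using H by (intro sum_threshold_ratio_Pow_le) (auto intro: finite_subset)
  finally show ?thesis .
qed

lemma sum_flip_signs_le:
  assumes H: "H \<subseteq> {..<m}" and nz: "\<forall>i<m. G i \<noteq> 0" and "0 \<le> c"
    and bound: "\<And>G. \<forall>i<m. G i \<noteq> 0 \<Longrightarrow> \<Phi> G \<le> c * null_ratio \<alpha> m H G"
  shows "(\<Sum>S\<in>Pow H. \<Phi> (flip_signs S G)) \<le> 2 ^ card H * c"
proof -
  have "(\<Sum>S\<in>Pow H. \<Phi> (flip_signs S G)) \<le> (\<Sum>S\<in>Pow H. c * null_ratio \<alpha> m H (flip_signs S G))"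
    using nz by (intro sum_mono bound) (simp add: flip_signs_def)
  also have "\<dots> \<le> c * 2 ^ card H"
    unfolding sum_distrib_left[symmetric]
    by (rule mult_left_mono[OF sum_null_ratio_flip_signs[OF H nz] \<open>0 \<le> c\<close>])
  finally show ?thesis by (simp add: mult.commute)
qed

section \<open>Swapping the statistics of a unit\<close>

text \<open>Negating the second half-sample of unit \<open>i\<close> swaps \<open>V_i\<close> with \<open>V0_i\<close> and keeps \<open>S_i\<close>, hence
  swaps \<open>T_i\<close> with \<open>T0_i\<close>; for \<open>n_i = 2\<close> negating the second observation does the same.\<close>
definition flip_coords :: "(nat \<Rightarrow> nat) \<Rightarrow> (nat \<Rightarrow> nat set) \<Rightarrow> nat \<Rightarrow> nat set" where
  "flip_coords n s i = (if n i = 2 then {1} else grp2 n s i)"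

definition flip_data ::
    "(nat \<Rightarrow> nat) \<Rightarrow> nat set \<Rightarrow> (nat \<Rightarrow> nat set) \<Rightarrow> (nat \<times> nat \<Rightarrow> real) \<Rightarrow> nat \<times> nat \<Rightarrow> real" where
  "flip_data n S s = flip_signs (SIGMA i:S. flip_coords n s i)"

lemma flip_coords_subset: "flip_coords n s i \<subseteq> {..<n i}"
  by (auto simp: flip_coords_def grp2_def)

lemma flip_data_empty: "flip_data n {} s = id"
  by (simp add: flip_data_def flip_signs_empty)

lemma flip_data_insert:
  assumes "i \<notin> S"
  shows "flip_data n (insert i S) s = flip_data n {i} s \<circ> flip_data n S s"
proof -
  have "(SIGMA j:insert i S. flip_coords n s j) = (SIGMA j:{i}. flip_coords n s j) \<union> (SIGMA j:S. flip_coords n s j)"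
    and "(SIGMA j:{i}. flip_coords n s j) \<inter> (SIGMA j:S. flip_coords n s j) = {}"
    using assms by auto
  then show ?thesis unfolding flip_data_def by (simp add: flip_signs_Un)
qed

lemma smean_svar_uminus:
  assumes "\<And>j. j \<in> A \<Longrightarrow> y (i, j) = - x (i, j)"
  shows "smean y i A = - smean x i A" "svar y i A = svar x i A"
proof -
  show mean: "smean y i A = - smean x i A"
    using assms by (simp add: smean_def sum_negf)
  have "(y (i, j) - smean y i A)\<^sup>2 = (x (i, j) - smean x i A)\<^sup>2" if "j \<in> A" for j
    using assms[OF that] unfolding mean by algebra
  then show "svar y i A = svar x i A"
    by (simp add: svar_def)
qed

lemma smean_svar_cong:
  assumes "\<And>j. j \<in> A \<Longrightarrow> y (i, j) = x (i, j)"
  shows "smean y i A = smean x i A" "svar y i A = svar x i A"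
  using assms by (simp_all add: smean_def svar_def)

lemma Tstat_T0stat_cong:
  assumes "\<And>j. x (i, j) = y (i, j)"
  shows "Tstat n x s i = Tstat n y s i" "T0stat n x s i = T0stat n y s i"
  using smean_svar_cong[of _ y i x] assms
  by (simp_all add: Tstat_def T0stat_def Vstat_def V0stat_def Sstat_def Let_def)

lemma Tstat_T0stat_flip_data_at:
  assumes "n i \<ge> 2"
  shows "Tstat n (flip_data n {i} s x) s i = T0stat n x s i"
    and "T0stat n (flip_data n {i} s x) s i = Tstat n x s i"
proof -
  let ?y = "flip_data n {i} s x"
  have "Tstat n ?y s i = T0stat n x s i \<and> T0stat n ?y s i = Tstat n x s i"
  proof (cases "n i = 2")
    case True
    then have "?y (i, 0) = x (i, 0)" "?y (i, 1) = - x (i, 1)"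
      by (simp_all add: flip_data_def flip_signs_def flip_coords_def)
    then show ?thesis using True by (simp add: Tstat_def T0stat_def)
  next
    case False
    have "?y (i, j) = - x (i, j)" if "j \<in> grp2 n s i" for j
      using that False by (simp add: flip_data_def flip_signs_def flip_coords_def)
    moreover have "?y (i, j) = x (i, j)" if "j \<in> s i" for j
      using that False by (simp add: flip_data_def flip_signs_def flip_coords_def grp2_def)
    ultimately have "smean ?y i (grp2 n s i) = - smean x i (grp2 n s i)"
        "svar ?y i (grp2 n s i) = svar x i (grp2 n s i)"
        "smean ?y i (s i) = smean x i (s i)" "svar ?y i (s i) = svar x i (s i)"
      using smean_svar_uminus smean_svar_cong by metis+
    then show ?thesis
      using False by (simp add: Tstat_def T0stat_def Vstat_def V0stat_def Sstat_def Let_def)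
  qed
  then show "Tstat n ?y s i = T0stat n x s i" "T0stat n ?y s i = Tstat n x s i"
    by simp_all
qed

lemma Tstat_T0stat_flip_data:
  assumes "n i \<ge> 2"
  shows "Tstat n (flip_data n {i} s x) s = (Tstat n x s)(i := T0stat n x s i)"
    and "T0stat n (flip_data n {i} s x) s = (T0stat n x s)(i := Tstat n x s i)"
proof -
  have "Tstat n (flip_data n {i} s x) s k = Tstat n x s k"
      "T0stat n (flip_data n {i} s x) s k = T0stat n x s k" if "k \<noteq> i" for k
    using that by (simp_all add: Tstat_T0stat_cong[of x k "flip_data n {i} s x"] flip_data_def flip_signs_def)
  then show "Tstat n (flip_data n {i} s x) s = (Tstat n x s)(i := T0stat n x s i)"
      "T0stat n (flip_data n {i} s x) s = (T0stat n x s)(i := Tstat n x s i)"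
    using Tstat_T0stat_flip_data_at[of n i, OF assms] by (auto simp: fun_eq_iff)
qed

abbreviation permutation_invariant :: "nat \<Rightarrow> ((nat \<Rightarrow> real) \<Rightarrow> real) \<Rightarrow> bool" where
  "permutation_invariant m h \<equiv> \<forall>w \<pi>. \<pi> permutes {..<2 * m} \<longrightarrow> h (w \<circ> \<pi>) = h w"

lemma transpose_add_permutes: "(i::nat) < m \<Longrightarrow> Transposition.transpose i (m + i) permutes {..<2 * m}"
  by (rule permutes_swap_id) auto

lemma pooled_swap:
  assumes "i < m"
  shows "pooled m (a(i := b i)) (b(i := a i)) = pooled m a b \<circ> Transposition.transpose i (m + i)"
  using assms by (auto simp: pooled_def Transposition.transpose_def fun_eq_iff)

lemma fmix_hat_swap:
  assumes "i < m" and "permutation_invariant m hsel"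
  shows "fmix_hat K hsel m (T(i := T0 i)) (T0(i := T i)) = fmix_hat K hsel m T T0"
proof -
  have "hsel (pooled m (T(i := T0 i)) (T0(i := T i))) = hsel (pooled m T T0)"
    using assms by (simp add: pooled_swap transpose_add_permutes)
  moreover have "(\<Sum>k<m. Kh K h (t - (T(i := T0 i)) k) + Kh K h (t - (T0(i := T i)) k))
      = (\<Sum>k<m. Kh K h (t - T k) + Kh K h (t - T0 k))" for h t
    by (rule sum.cong) auto
  ultimately show ?thesis
    by (simp add: fmix_hat_def fun_eq_iff)
qed

definition symmetrized_kde :: "(real \<Rightarrow> real) \<Rightarrow> ((nat \<Rightarrow> real) \<Rightarrow> real) \<Rightarrow> nat \<Rightarrow> (nat \<Rightarrow> real) \<Rightarrow> real \<Rightarrow> real" where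
  "symmetrized_kde K h0sel m R t =
     (let h0 = h0sel (pooled m R (\<lambda>i. - R i)) in
      ((\<Sum>i<m. Kh K h0 (t - R i)) + (\<Sum>i<m. Kh K h0 (t + R i))) / (2 * real m))"

lemma f0_KN_eq_symmetrized_kde: "f0_KN K h0sel m T T0 = symmetrized_kde K h0sel m (Ttil T T0)"
  by (simp add: fun_eq_iff f0_KN_def symmetrized_kde_def Let_def)

lemma symmetrized_kde_uminus_upd:
  assumes "i < m" and "permutation_invariant m h0sel"
  shows "symmetrized_kde K h0sel m (R(i := - R i)) = symmetrized_kde K h0sel m R"
proof -
  have "pooled m (R(i := - R i)) (\<lambda>k. - (R(i := - R i)) k) = pooled m R (\<lambda>k. - R k) \<circ> Transposition.transpose i (m + i)"
  proof -
    have "(\<lambda>k. - (R(i := - R i)) k) = (\<lambda>k. - R k)(i := R i)" "R(i := - R i) = R(i := (\<lambda>k. - R k) i)"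
      by auto
    then show ?thesis using pooled_swap[OF assms(1), of R "\<lambda>k. - R k"] by simp
  qed
  then have "h0sel (pooled m (R(i := - R i)) (\<lambda>k. - (R(i := - R i)) k)) = h0sel (pooled m R (\<lambda>k. - R k))"
    using assms by (simp add: transpose_add_permutes)
  moreover have "(\<Sum>k<m. Kh K h (t - (R(i := - R i)) k)) + (\<Sum>k<m. Kh K h (t + (R(i := - R i)) k))
      = (\<Sum>k<m. Kh K h (t - R k)) + (\<Sum>k<m. Kh K h (t + R k))" for h t
    unfolding sum.distrib[symmetric] by (rule sum.cong) auto
  ultimately show ?thesis
    by (simp add: symmetrized_kde_def fun_eq_iff)
qed

lemma Ttil_swap:
  "Ttil (T(i := T0 i)) (T0(i := T i)) \<in> {Ttil T T0, (Ttil T T0)(i := - Ttil T T0 i)}"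
  by (auto simp: Ttil_def fun_eq_iff abs_if split: if_splits)

lemma f0_KN_swap:
  assumes "i < m" and "permutation_invariant m h0sel"
  shows "f0_KN K h0sel m (T(i := T0 i)) (T0(i := T i)) = f0_KN K h0sel m T T0"
  using Ttil_swap[of T i T0] symmetrized_kde_uminus_upd[OF assms]
  by (auto simp: f0_KN_eq_symmetrized_kde)

lemma emp_cf_permute:
  assumes "\<pi> permutes {..<N}"
  shows "emp_cf N (w \<circ> \<pi>) = emp_cf N w"
  using sum.permute[OF assms, of "\<lambda>k. exp (\<i> * complex_of_real (s * w k))" for s]
  by (simp add: emp_cf_def fun_eq_iff comp_def)

lemma f0_JC_swap:
  assumes "i < m"
  shows "f0_JC \<gamma> m (T(i := T0 i)) (T0(i := T i)) = f0_JC \<gamma> m T T0"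
proof -
  have "emp_cf (2 * m) (pooled m (T(i := T0 i)) (T0(i := T i))) = emp_cf (2 * m) (pooled m T T0)"
    using assms by (simp add: pooled_swap emp_cf_permute transpose_add_permutes)
  then show ?thesis
    by (simp only: f0_JC_def[abs_def] Let_def)
qed

lemma f0_hat_swap:
  assumes "i < m" and "permutation_invariant m h0sel"
  shows "f0_hat opt K h0sel \<gamma> m (T(i := T0 i)) (T0(i := T i)) = f0_hat opt K h0sel \<gamma> m T T0"
  using assms by (cases opt) (simp_all add: f0_hat_def f0_KN_swap f0_JC_swap)

lemma SENS_g_flip_data:
  assumes "i < m" "2 \<le> n i"
    and "permutation_invariant m hsel"
    and "permutation_invariant m h0sel"
  shows "SENS_g opt K hsel h0sel \<gamma> n m (flip_data n {i} s x, s) = SENS_g opt K hsel h0sel \<gamma> n m (x, s)"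
  using assms
  by (simp add: fun_eq_iff SENS_g_def Let_def Tstat_T0stat_flip_data[of n i] f0_hat_swap fmix_hat_swap)

lemma SENS_G_flip_data_single:
  assumes "i < m" "2 \<le> n i"
    and "permutation_invariant m hsel"
    and "permutation_invariant m h0sel"
  shows "SENS_G opt K hsel h0sel \<gamma> n m (flip_data n {i} s x, s)
       = flip_signs {i} (SENS_G opt K hsel h0sel \<gamma> n m (x, s))"
proof -
  let ?g = "SENS_g opt K hsel h0sel \<gamma> n m (x, s)" and ?T = "Tstat n x s" and ?U = "T0stat n x s"
  have U: "SENS_U opt K hsel h0sel \<gamma> n m (flip_data n {i} s x, s) = ?g \<circ> (?T(i := ?U i))"
      "SENS_U0 opt K hsel h0sel \<gamma> n m (flip_data n {i} s x, s) = ?g \<circ> (?U(i := ?T i))"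
      "SENS_U opt K hsel h0sel \<gamma> n m (x, s) = ?g \<circ> ?T"
      "SENS_U0 opt K hsel h0sel \<gamma> n m (x, s) = ?g \<circ> ?U"
    using SENS_g_flip_data[of i m n, OF assms] Tstat_T0stat_flip_data[of n i, OF assms(2)]
    by (simp_all add: SENS_U_def SENS_U0_def fun_eq_iff)
  have swap: "sgn (b - a) * max (exp (- a)) (exp (- b)) = - (sgn (a - b) * max (exp (- b)) (exp (- a)))"
    for a b :: real
    by (simp add: sgn_if max.commute)
  show ?thesis
    by (simp add: fun_eq_iff SENS_G_def Let_def U flip_signs_def swap[of "?g (?U i)" "?g (?T i)"])
qed

lemma SENS_G_flip_data:
  assumes "finite S" "\<forall>i\<in>S. i < m \<and> 2 \<le> n i"
    and "permutation_invariant m hsel"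
    and "permutation_invariant m h0sel"
  shows "SENS_G opt K hsel h0sel \<gamma> n m (flip_data n S s x, s)
       = flip_signs S (SENS_G opt K hsel h0sel \<gamma> n m (x, s))"
  using assms(1,2)
proof (induction S rule: finite_induct)
  case empty
  show ?case by (simp add: flip_data_empty flip_signs_empty)
next
  case (insert i S)
  let ?G = "SENS_G opt K hsel h0sel \<gamma> n m"
  have "?G (flip_data n (insert i S) s x, s) = ?G (flip_data n {i} s (flip_data n S s x), s)"
    unfolding flip_data_insert[OF insert.hyps(2)] by simp
  also have "\<dots> = flip_signs {i} (?G (flip_data n S s x, s))"
    using insert.prems by (intro SENS_G_flip_data_single assms(3,4)) auto
  also have "\<dots> = flip_signs (insert i S) (?G (x, s))"
    using insert flip_signs_Un[of "{i}" S] by simp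
  finally show ?case .
qed

section \<open>Sign-flip invariance of the data distribution\<close>

lemma flip_signs_measurable:
  fixes \<mu> :: "real measure"
  assumes "D \<subseteq> I" "sets \<mu> = sets borel"
  shows "flip_signs D \<in> measurable (PiM I (\<lambda>_. \<mu>)) (PiM I (\<lambda>_. \<mu>))"
proof (rule measurable_PiM_single')
  have "uminus \<in> measurable \<mu> \<mu>"
    by (simp add: measurable_cong_sets[OF assms(2) assms(2)])
  then have "(\<lambda>z. - z j) \<in> measurable (PiM I (\<lambda>_. \<mu>)) \<mu>" if "j \<in> I" for j
    using that by measurable
  then show "(\<lambda>z. flip_signs D z j) \<in> measurable (PiM I (\<lambda>_. \<mu>)) \<mu>" if "j \<in> I" for j
    using that by (simp add: flip_signs_def)
  show "flip_signs D \<in> space (PiM I (\<lambda>_. \<mu>)) \<rightarrow> (\<Pi>\<^sub>E j\<in>I. space \<mu>)"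
    using assms sets_eq_imp_space_eq[OF assms(2)]
    by (auto simp: space_PiM PiE_def extensional_def flip_signs_def)
qed

lemma distr_PiM_flip_signs:
  fixes \<mu> :: "real measure"
  assumes "prob_space \<mu>" "sets \<mu> = sets borel"
    and symmetric: "\<And>A. A \<in> sets borel \<Longrightarrow> emeasure \<mu> (uminus -` A) = emeasure \<mu> A"
    and "finite I" "D \<subseteq> I"
  shows "distr (PiM I (\<lambda>_. \<mu>)) (PiM I (\<lambda>_. \<mu>)) (flip_signs D) = PiM I (\<lambda>_. \<mu>)"
proof -
  interpret prob_space \<mu> by fact
  interpret product_sigma_finite "\<lambda>_. \<mu>"
    by (simp add: product_sigma_finite_def sigma_finite_measure_axioms)
  have space: "space \<mu> = UNIV" using sets_eq_imp_space_eq[OF assms(2)] by simp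
  have flip: "flip_signs D \<in> measurable (PiM I (\<lambda>_. \<mu>)) (PiM I (\<lambda>_. \<mu>))"
    by (rule flip_signs_measurable[OF assms(5,2)])
  show ?thesis
  proof (rule PiM_eqI[OF \<open>finite I\<close>])
    fix A assume A: "\<And>i. i \<in> I \<Longrightarrow> A i \<in> sets \<mu>"
    define B where "B j = (if j \<in> D then uminus -` A j else A j)" for j
    have B: "B j \<in> sets \<mu>" "emeasure \<mu> (B j) = emeasure \<mu> (A j)" if "j \<in> I" for j
      using A[OF that] symmetric[of "A j"] measurable_sets[of uminus \<mu> \<mu> "A j"] assms(2)
      by (auto simp: B_def space measurable_cong_sets[OF assms(2) assms(2)])
    have "flip_signs D -` Pi\<^sub>E I A \<inter> space (PiM I (\<lambda>_. \<mu>)) = Pi\<^sub>E I B"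
      using assms(5) by (auto simp: flip_signs_def B_def space_PiM space PiE_def Pi_def extensional_def)
    moreover have "Pi\<^sub>E I A \<in> sets (PiM I (\<lambda>_. \<mu>))"
      using A by (intro sets_PiM_I_finite) (auto simp: \<open>finite I\<close>)
    ultimately have "emeasure (distr (PiM I (\<lambda>_. \<mu>)) (PiM I (\<lambda>_. \<mu>)) (flip_signs D)) (Pi\<^sub>E I A)
        = (\<Prod>j\<in>I. emeasure \<mu> (B j))"
      using B by (simp add: emeasure_distr[OF flip] emeasure_PiM[OF \<open>finite I\<close>])
    then show "emeasure (distr (PiM I (\<lambda>_. \<mu>)) (PiM I (\<lambda>_. \<mu>)) (flip_signs D)) (Pi\<^sub>E I A)
        = (\<Prod>j\<in>I. emeasure \<mu> (A j))"
      using B by simp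
  qed simp
qed

lemma prob_space_density_lborel:
  fixes g :: "real \<Rightarrow> real"
  assumes "g \<in> borel_measurable borel" "(\<integral>\<^sup>+t. ennreal (g t) \<partial>lborel) = 1"
  shows "prob_space (density lborel (\<lambda>t. ennreal (g t)))"
  using assms by (intro prob_spaceI) (simp add: emeasure_density)

lemma emeasure_density_uminus:
  fixes g :: "real \<Rightarrow> real"
  assumes g: "g \<in> borel_measurable borel" and symmetric: "\<And>t. g (- t) = g t"
    and A: "A \<in> sets borel"
  shows "emeasure (density lborel (\<lambda>t. ennreal (g t))) (uminus -` A)
       = emeasure (density lborel (\<lambda>t. ennreal (g t))) A"
proof -
  have "uminus -` A \<in> sets borel"
    using measurable_sets[OF borel_measurable_uminus[OF measurable_ident_sets[OF refl]] A] by simp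
  then have "emeasure (density lborel (\<lambda>t. ennreal (g t))) (uminus -` A)
      = (\<integral>\<^sup>+t. ennreal (g (- t)) * indicator A (- t) \<partial>lborel)"
    using g by (simp add: emeasure_density symmetric indicator_def)
  also have "\<dots> = (\<integral>\<^sup>+t. ennreal (g t) * indicator A t \<partial>distr lborel borel uminus)"
    using A g by (subst nn_integral_distr) auto
  also have "\<dots> = emeasure (density lborel (\<lambda>t. ennreal (g t))) A"
    using A g by (simp add: lborel_distr_uminus emeasure_density)
  finally show ?thesis .
qed

lemma emeasure_PiM_density_box:
  fixes g :: "real \<Rightarrow> real"
  assumes "g \<in> borel_measurable borel" "(\<integral>\<^sup>+t. ennreal (g t) \<partial>lborel) = 1"
    and "finite I" "\<And>j. j \<in> I \<Longrightarrow> E j \<in> sets borel"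
  shows "emeasure (PiM I (\<lambda>_. density lborel (\<lambda>t. ennreal (g t)))) (Pi\<^sub>E I E)
       = (\<Prod>j\<in>I. \<integral>\<^sup>+t. ennreal (g t) * indicator (E j) t \<partial>lborel)"
proof -
  interpret prob_space "density lborel (\<lambda>t. ennreal (g t))"
    using assms(1,2) by (rule prob_space_density_lborel)
  interpret product_sigma_finite "\<lambda>_. density lborel (\<lambda>t. ennreal (g t))"
    by (simp add: product_sigma_finite_def sigma_finite_measure_axioms)
  show ?thesis
    using assms by (simp add: emeasure_PiM emeasure_density)
qed

lemma measurable_PiM_density_kernel:
  fixes f :: "'a \<Rightarrow> real \<Rightarrow> real"
  assumes f: "(\<lambda>(y, t). f y t) \<in> borel_measurable (M \<Otimes>\<^sub>M borel)"
    and one: "\<And>y. y \<in> space M \<Longrightarrow> (\<integral>\<^sup>+t. ennreal (f y t) \<partial>lborel) = 1"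
    and I: "finite I"
  shows "(\<lambda>y. PiM I (\<lambda>_. density lborel (\<lambda>t. ennreal (f y t))))
           \<in> measurable M (subprob_algebra (PiM I (\<lambda>_. borel :: real measure)))"
proof -
  let ?K = "\<lambda>y. PiM I (\<lambda>_. density lborel (\<lambda>t. ennreal (f y t)))"
  have fy: "f y \<in> borel_measurable borel" if "y \<in> space M" for y
    using measurable_Pair2[OF f that] by simp
  have box: "(\<lambda>y. emeasure (?K y) (Pi\<^sub>E I E)) \<in> borel_measurable M"
    if E: "\<And>j. j \<in> I \<Longrightarrow> E j \<in> sets borel" for E
  proof -
    have "(\<lambda>y. \<Prod>j\<in>I. \<integral>\<^sup>+t. ennreal (f y t) * indicator (E j) t \<partial>lborel) \<in> borel_measurable M"
    proof (intro borel_measurable_prod_ennreal lborel.borel_measurable_nn_integral[unfolded split_beta'])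
      fix j assume "j \<in> I"
      then have [measurable]: "E j \<in> sets borel" by (rule E)
      have "(\<lambda>(y, t). f y t) \<in> borel_measurable (M \<Otimes>\<^sub>M lborel)"
        using f by (simp add: measurable_cong_sets[OF sets_pair_measure_cong[OF refl sets_lborel] refl])
      then show "(\<lambda>x. ennreal (f (fst x) (snd x)) * indicator (E j) (snd x)) \<in> borel_measurable (M \<Otimes>\<^sub>M lborel)"
        by measurable
    qed
    then show ?thesis
      using fy one by (subst measurable_cong) (auto simp: emeasure_PiM_density_box[OF _ _ I E])
  qed
  show ?thesis
  proof (rule measurable_subprob_algebra_generated[OF sets_PiM Int_stable_prod_algebra
        prod_algebra_sets_into_space])
    fix y assume y: "y \<in> space M"
    show "subprob_space (?K y)"
      using prob_space_density_lborel[OF fy[OF y] one[OF y]]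
      by (intro prob_space_imp_subprob_space prob_space_PiM) auto
    show "sets (?K y) = sets (PiM I (\<lambda>_. borel))"
      by (rule sets_PiM_cong) simp_all
  next
    fix A assume "A \<in> prod_algebra I (\<lambda>_. borel :: real measure)"
    then show "(\<lambda>y. emeasure (?K y) A) \<in> borel_measurable M"
      using I box by (auto simp: prod_algebra_eq_finite)
  qed (use box in simp)
qed

abbreviation obs_space :: "nat \<Rightarrow> (nat \<Rightarrow> nat) \<Rightarrow> (nat \<times> nat \<Rightarrow> real) measure" where
  "obs_space m n \<equiv> PiM (obs_idx m n) (\<lambda>_. borel)"

abbreviation others_space :: "nat \<Rightarrow> (nat \<Rightarrow> nat) \<Rightarrow> nat \<Rightarrow> (nat \<times> nat \<Rightarrow> real) measure" where
  "others_space m n i \<equiv> PiM (other_idx m n i) (\<lambda>_. borel)"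

lemma combine_measurable:
  assumes "i < m"
  shows "(\<lambda>(y, z). combine n i y z) \<in> measurable (others_space m n i \<Otimes>\<^sub>M PiM {..<n i} (\<lambda>_. borel)) (obs_space m n)"
proof (rule measurable_PiM_single')
  fix kj assume "kj \<in> obs_idx m n"
  then obtain k j where kj: "kj = (k, j)" "k < m" "j < n k" by (auto simp: obs_idx_def)
  show "(\<lambda>\<omega>. (case \<omega> of (y, z) \<Rightarrow> combine n i y z) kj)
      \<in> borel_measurable (others_space m n i \<Otimes>\<^sub>M PiM {..<n i} (\<lambda>_. borel))"
  proof (cases "k = i")
    case True
    then show ?thesis using kj by (simp add: combine_def split_beta')
  next
    case False
    then have "kj \<in> other_idx m n i" using kj by (simp add: other_idx_def)
    then show ?thesis using kj False by (simp add: combine_def split_beta')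
  qed
qed (use assms in \<open>auto simp: combine_def space_pair_measure space_PiM PiE_def extensional_def
      obs_idx_def other_idx_def\<close>)

definition symmetric_given_others :: "nat \<Rightarrow> (nat \<Rightarrow> nat) \<Rightarrow> (nat \<times> nat \<Rightarrow> real) measure \<Rightarrow> nat \<Rightarrow> bool" where
  "symmetric_given_others m n P i \<longleftrightarrow> (\<exists>f :: (nat \<times> nat \<Rightarrow> real) \<Rightarrow> real \<Rightarrow> real.
       (\<lambda>(y, t). f y t) \<in> borel_measurable (others_space m n i \<Otimes>\<^sub>M borel)
     \<and> (\<forall>y \<in> space (others_space m n i).
          (\<forall>t. 0 \<le> f y t \<and> f y (- t) = f y t) \<and> (\<integral>\<^sup>+t. ennreal (f y t) \<partial>lborel) = 1)
     \<and> P = bind (distr P (others_space m n i) (\<lambda>x. restrict x (other_idx m n i)))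
             (\<lambda>y. distr (PiM {..<n i} (\<lambda>_. density lborel (f y))) (obs_space m n) (combine n i y)))"

lemma flip_data_measurable:
  "S \<subseteq> {..<m} \<Longrightarrow> flip_data n S s \<in> measurable (obs_space m n) (obs_space m n)"
  unfolding flip_data_def
  by (intro flip_signs_measurable) (auto simp: obs_idx_def flip_coords_def grp2_def split: if_splits)

lemma flip_data_combine:
  "i < m \<Longrightarrow> flip_data n {i} s \<circ> combine n i y = combine n i y \<circ> flip_signs (flip_coords n s i)"
  using flip_coords_subset[of n s i]
  by (auto simp: fun_eq_iff flip_data_def flip_signs_def combine_def)

lemma distr_combine_flip_data:
  fixes g :: "real \<Rightarrow> real"
  assumes i: "i < m" and y: "y \<in> space (others_space m n i)"
    and g: "g \<in> borel_measurable borel" "\<forall>t. 0 \<le> g t \<and> g (- t) = g t" "(\<integral>\<^sup>+t. ennreal (g t) \<partial>lborel) = 1"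
  defines "\<mu> \<equiv> PiM {..<n i} (\<lambda>_. density lborel (\<lambda>t. ennreal (g t)))"
  shows "distr (distr \<mu> (obs_space m n) (combine n i y)) (obs_space m n) (flip_data n {i} s)
       = distr \<mu> (obs_space m n) (combine n i y)"
proof -
  have flip: "flip_data n {i} s \<in> measurable (obs_space m n) (obs_space m n)"
    using i by (intro flip_data_measurable) auto
  have sets: "sets \<mu> = sets (PiM {..<n i} (\<lambda>_. borel))"
    unfolding \<mu>_def by (rule sets_PiM_cong) simp_all
  have comb: "combine n i y \<in> measurable \<mu> (obs_space m n)"
    using measurable_Pair2[OF combine_measurable[OF i] y] by (simp add: measurable_cong_sets[OF sets refl])
  have "distr \<mu> \<mu> (flip_signs (flip_coords n s i)) = \<mu>"
    unfolding \<mu>_def using g prob_space_density_lborel[OF g(1,3)] emeasure_density_uminus[OF g(1)]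
    by (intro distr_PiM_flip_signs flip_coords_subset) auto
  moreover have "flip_signs (flip_coords n s i) \<in> measurable \<mu> \<mu>"
    unfolding \<mu>_def by (rule flip_signs_measurable[OF flip_coords_subset]) simp
  ultimately show ?thesis
    by (simp add: distr_distr[OF flip comb] flip_data_combine[OF i] distr_distr[OF comb, symmetric])
qed

lemma distr_flip_data_single:
  assumes i: "i < m" and "symmetric_given_others m n P i"
  shows "distr P (obs_space m n) (flip_data n {i} s) = P"
proof -
  obtain f :: "(nat \<times> nat \<Rightarrow> real) \<Rightarrow> real \<Rightarrow> real" where
    f: "(\<lambda>(y, t). f y t) \<in> borel_measurable (others_space m n i \<Otimes>\<^sub>M borel)"
    and fy: "\<And>y. y \<in> space (others_space m n i) \<Longrightarrow>
               (\<forall>t. 0 \<le> f y t \<and> f y (- t) = f y t) \<and> (\<integral>\<^sup>+t. ennreal (f y t) \<partial>lborel) = 1"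
    and P: "P = bind (distr P (others_space m n i) (\<lambda>x. restrict x (other_idx m n i)))
             (\<lambda>y. distr (PiM {..<n i} (\<lambda>_. density lborel (f y))) (obs_space m n) (combine n i y))"
    using assms(2) unfolding symmetric_given_others_def by blast
  define M where "M = distr P (others_space m n i) (\<lambda>x. restrict x (other_idx m n i))"
  let ?N = "\<lambda>y. distr (PiM {..<n i} (\<lambda>_. density lborel (\<lambda>t. ennreal (f y t)))) (obs_space m n) (combine n i y)"
  have space_M: "space M = space (others_space m n i)" by (simp add: M_def)
  have flip: "flip_data n {i} s \<in> measurable (obs_space m n) (obs_space m n)"
    using i by (intro flip_data_measurable) auto
  have N: "?N \<in> measurable M (subprob_algebra (obs_space m n))"
    using measurable_distr2[OF combine_measurable[OF i] measurable_PiM_density_kernel[OF f]] fy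
    by (simp add: M_def measurable_cong_sets[OF sets_distr refl])
  have invariant: "distr (?N y) (obs_space m n) (flip_data n {i} s) = ?N y" if "y \<in> space M" for y
    using that measurable_Pair2[OF f] fy[of y] by (intro distr_combine_flip_data i) (auto simp: space_M)
  have "distr (bind M ?N) (obs_space m n) (flip_data n {i} s)
      = bind M (\<lambda>y. distr (?N y) (obs_space m n) (flip_data n {i} s))"
    using space_M by (intro distr_bind[OF N _ flip]) simp
  also have "\<dots> = bind M ?N"
    using invariant by (rule bind_cong[OF refl])
  finally show ?thesis
    using P by (simp add: M_def)
qed

lemma distr_flip_data:
  assumes "finite S" "S \<subseteq> {..<m}" "sets P = sets (obs_space m n)"
    and "\<And>i. i \<in> S \<Longrightarrow> symmetric_given_others m n P i"
  shows "distr P (obs_space m n) (flip_data n S s) = P"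
  using assms(1,2,4)
proof (induction S rule: finite_induct)
  case empty
  show ?case
    using assms(3) by (simp add: flip_data_empty distr_id2)
next
  case (insert i S)
  have "flip_data n S s \<in> measurable P (obs_space m n)"
    using flip_data_measurable[of S m n s] insert.prems(1) by (simp add: measurable_cong_sets[OF assms(3) refl])
  then have "distr P (obs_space m n) (flip_data n (insert i S) s)
      = distr (distr P (obs_space m n) (flip_data n S s)) (obs_space m n) (flip_data n {i} s)"
    using insert.prems(1) flip_data_measurable[of "{i}" m n s]
    by (simp add: flip_data_insert[OF insert.hyps(2)] distr_distr)
  then show ?case
    using insert by (simp add: distr_flip_data_single)
qed

lemma flip_data_pair_measurable:
  fixes Q :: "(nat \<Rightarrow> nat set) pmf"
  assumes S: "S \<subseteq> {..<m}" and sets_P: "sets P = sets (obs_space m n)"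
  shows "(\<lambda>(x, s). (flip_data n S s x, s)) \<in> measurable (P \<Otimes>\<^sub>M measure_pmf Q) (P \<Otimes>\<^sub>M measure_pmf Q)"
proof -
  have space_P: "space P = space (obs_space m n)" using sets_eq_imp_space_eq[OF sets_P] .
  have "(\<lambda>\<omega>. flip_data n S (snd \<omega>) (fst \<omega>)) \<in> measurable (P \<Otimes>\<^sub>M measure_pmf Q) (obs_space m n)"
  proof (rule measurable_PiM_single')
    fix kj assume kj: "kj \<in> obs_idx m n"
    have "(\<lambda>x. x kj) \<in> borel_measurable P"
      using kj by (simp add: measurable_cong_sets[OF sets_P refl])
    then have "(\<lambda>\<omega>. fst \<omega> kj) \<in> borel_measurable (P \<Otimes>\<^sub>M measure_pmf Q)"
      by measurable
    moreover have "{\<omega> \<in> space (P \<Otimes>\<^sub>M measure_pmf Q). kj \<in> (SIGMA i:S. flip_coords n (snd \<omega>) i)}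
        = space P \<times> {s. kj \<in> (SIGMA i:S. flip_coords n s i)}"
      by (auto simp: space_pair_measure)
    ultimately show "(\<lambda>\<omega>. flip_data n S (snd \<omega>) (fst \<omega>) kj) \<in> borel_measurable (P \<Otimes>\<^sub>M measure_pmf Q)"
      unfolding flip_data_def flip_signs_def by (intro measurable_If) auto
  next
    show "(\<lambda>\<omega>. flip_data n S (snd \<omega>) (fst \<omega>)) \<in> space (P \<Otimes>\<^sub>M measure_pmf Q) \<rightarrow> (\<Pi>\<^sub>E kj\<in>obs_idx m n. space borel)"
      using S flip_coords_subset
      by (fastforce simp: space_pair_measure space_P space_PiM PiE_def extensional_def obs_idx_def
          flip_data_def flip_signs_def)
  qed
  then show ?thesis
    unfolding split_beta' by (intro measurable_Pair) (simp_all add: measurable_cong_sets[OF refl sets_P])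
qed

lemma distr_pair_pmf_fiberwise:
  fixes Q :: "'b pmf"
  assumes "prob_space P"
    and F: "(\<lambda>(x, s). (g s x, s)) \<in> measurable (P \<Otimes>\<^sub>M measure_pmf Q) (P \<Otimes>\<^sub>M measure_pmf Q)"
    and g: "\<And>s. g s \<in> measurable P P" "\<And>s. distr P P (g s) = P"
  shows "distr (P \<Otimes>\<^sub>M measure_pmf Q) (P \<Otimes>\<^sub>M measure_pmf Q) (\<lambda>(x, s). (g s x, s)) = P \<Otimes>\<^sub>M measure_pmf Q"
proof -
  interpret P: prob_space P by fact
  interpret Q: prob_space "measure_pmf Q" by (rule prob_space_measure_pmf)
  interpret pair_sigma_finite P "measure_pmf Q" ..
  show ?thesis
  proof (rule pair_measure_eqI[symmetric])
    fix A B assume A: "A \<in> sets P" and B: "B \<in> sets (measure_pmf Q)"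
    let ?X = "(\<lambda>(x, s). (g s x, s)) -` (A \<times> B) \<inter> space (P \<Otimes>\<^sub>M measure_pmf Q)"
    have "?X \<in> sets (P \<Otimes>\<^sub>M measure_pmf Q)"
      using measurable_sets[OF F] A B by simp
    moreover have "emeasure P ((\<lambda>x. (x, s)) -` ?X) = emeasure P A * indicator B s" for s
    proof -
      have "(\<lambda>x. (x, s)) -` ?X = (if s \<in> B then g s -` A \<inter> space P else {})"
        by (auto simp: space_pair_measure)
      then show ?thesis
        using emeasure_distr[OF g(1) A, of s] g(2)[of s] by simp
    qed
    ultimately have "emeasure (P \<Otimes>\<^sub>M measure_pmf Q) ?X = emeasure P A * emeasure (measure_pmf Q) B"
      using B by (simp add: emeasure_pair_measure_alt2 nn_integral_cmult_indicator)
    then show "emeasure P A * emeasure (measure_pmf Q) B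
        = emeasure (distr (P \<Otimes>\<^sub>M measure_pmf Q) (P \<Otimes>\<^sub>M measure_pmf Q) (\<lambda>(x, s). (g s x, s))) (A \<times> B)"
      using A B by (simp add: emeasure_distr[OF F])
  qed (simp_all add: prob_space_imp_sigma_finite prob_space_measure_pmf \<open>prob_space P\<close>)
qed

section \<open>FDR control\<close>

text \<open>The hypothesis \<open>0 \<le> c\<close> covers a non-integrable \<open>h\<close>, whose Bochner integral is \<open>0\<close>.\<close>
lemma integral_le_of_invariant_average:
  fixes h :: "'a \<Rightarrow> real" and F :: "'b \<Rightarrow> 'a \<Rightarrow> 'a"
  assumes "prob_space M" "finite I" "I \<noteq> {}" "0 \<le> c"
    and F: "\<And>S. S \<in> I \<Longrightarrow> F S \<in> measurable M M" "\<And>S. S \<in> I \<Longrightarrow> distr M M (F S) = M"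
    and bound: "AE \<omega> in M. (\<Sum>S\<in>I. h (F S \<omega>)) \<le> real (card I) * c"
  shows "integral\<^sup>L M h \<le> c"
proof (cases "integrable M h")
  case True
  interpret prob_space M by fact
  have h: "h \<in> borel_measurable M" using True by simp
  have int: "integrable M (\<lambda>\<omega>. h (F S \<omega>))" "(\<integral>\<omega>. h (F S \<omega>) \<partial>M) = integral\<^sup>L M h"
    if "S \<in> I" for S
    using integrable_distr_eq[OF F(1)[OF that] h] integral_distr[OF F(1)[OF that] h] F(2)[OF that] True
    by simp_all
  then have "real (card I) * integral\<^sup>L M h = (\<integral>\<omega>. (\<Sum>S\<in>I. h (F S \<omega>)) \<partial>M)"
    by simp
  also have "\<dots> \<le> (\<integral>\<omega>. real (card I) * c \<partial>M)"
    using bound int(1) by (intro integral_mono_AE) auto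
  also have "\<dots> = real (card I) * c"
    by (simp add: prob_space)
  finally show ?thesis
    using \<open>finite I\<close> \<open>I \<noteq> {}\<close> by (simp add: card_gt_0_iff)
qed (simp add: not_integrable_integral_eq \<open>0 \<le> c\<close>)

lemma SENS_G_nonzero:
  "SENS_U opt K hsel h0sel \<gamma> n m \<omega> i \<noteq> SENS_U0 opt K hsel h0sel \<gamma> n m \<omega> i
    \<Longrightarrow> SENS_G opt K hsel h0sel \<gamma> n m \<omega> i \<noteq> 0"
  by (simp add: SENS_G_def Let_def sgn_eq_0_iff max_def)

lemma integral_SENS_G_le:
  fixes P :: "(nat \<times> nat \<Rightarrow> real) measure" and Q :: "(nat \<Rightarrow> nat set) pmf"
  assumes n_ge2: "\<forall>i<m. 2 \<le> n i"
    and P: "prob_space P" "sets P = sets (obs_space m n)"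
    and H: "H \<subseteq> {..<m}" "\<And>i. i \<in> H \<Longrightarrow> symmetric_given_others m n P i"
    and h_perm: "permutation_invariant m hsel"
    and h0_perm: "permutation_invariant m h0sel"
    and U_neq: "AE \<omega> in P \<Otimes>\<^sub>M measure_pmf Q.
                  \<forall>i<m. SENS_U opt K hsel h0sel \<gamma> n m \<omega> i \<noteq> SENS_U0 opt K hsel h0sel \<gamma> n m \<omega> i"
    and "0 \<le> c" and bound: "\<And>G. \<forall>i<m. G i \<noteq> 0 \<Longrightarrow> \<Phi> G \<le> c * null_ratio \<alpha> m H G"
  shows "(\<integral>\<omega>. \<Phi> (SENS_G opt K hsel h0sel \<gamma> n m \<omega>) \<partial>(P \<Otimes>\<^sub>M measure_pmf Q)) \<le> c"
proof -
  let ?G = "SENS_G opt K hsel h0sel \<gamma> n m"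
  let ?F = "\<lambda>S (x, s). (flip_data n S s x, s)"
  have "finite H" using H(1) finite_subset by blast
  then have fin: "finite S" if "S \<in> Pow H" for S
    using that by (auto intro: finite_subset)
  have G_flip: "?G (?F S \<omega>) = flip_signs S (?G \<omega>)" if "S \<in> Pow H" for S \<omega>
  proof -
    have "\<forall>i\<in>S. i < m \<and> 2 \<le> n i" using that H(1) n_ge2 by auto
    then show ?thesis using SENS_G_flip_data[OF fin[OF that] _ h_perm h0_perm] by (cases \<omega>) simp
  qed
  show ?thesis
  proof (rule integral_le_of_invariant_average[where F = ?F and I = "Pow H"])
    fix S assume S: "S \<in> Pow H"
    then show F: "?F S \<in> measurable (P \<Otimes>\<^sub>M measure_pmf Q) (P \<Otimes>\<^sub>M measure_pmf Q)"
      using H(1) by (intro flip_data_pair_measurable[OF _ P(2)]) auto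
    have "distr P P (flip_data n S s) = P" for s
      using distr_flip_data[OF fin[OF S] _ P(2) H(2)] S H(1)
      by (auto simp: distr_cong[OF refl P(2)])
    moreover have "flip_data n S s \<in> measurable P P" for s
      using flip_data_measurable[of S m n s] S H(1) by (auto simp: measurable_cong_sets[OF P(2) P(2)])
    ultimately show "distr (P \<Otimes>\<^sub>M measure_pmf Q) (P \<Otimes>\<^sub>M measure_pmf Q) (?F S) = P \<Otimes>\<^sub>M measure_pmf Q"
      using F by (intro distr_pair_pmf_fiberwise[OF P(1)])
  next
    show "AE \<omega> in P \<Otimes>\<^sub>M measure_pmf Q. (\<Sum>S\<in>Pow H. \<Phi> (?G (?F S \<omega>))) \<le> real (card (Pow H)) * c"
      using U_neq
    proof eventually_elim
      case (elim \<omega>)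
      then have "\<forall>i<m. ?G \<omega> i \<noteq> 0" by (simp add: SENS_G_nonzero)
      then show ?case
        using sum_flip_signs_le[OF H(1) _ \<open>0 \<le> c\<close> bound] \<open>finite H\<close>
        by (simp add: G_flip card_Pow)
    qed
  qed (use prob_space_pair[OF P(1) prob_space_measure_pmf] \<open>finite H\<close> \<open>0 \<le> c\<close> in auto)
qed

theorem corollary1:
  fixes m :: nat and n :: "nat \<Rightarrow> nat"
    and P :: "(nat \<times> nat \<Rightarrow> real) measure"
    and Q :: "(nat \<Rightarrow> nat set) pmf"
    and \<mu> :: "nat \<Rightarrow> real"
    and opt :: sens_option and K :: "real \<Rightarrow> real"
    and hsel h0sel :: "(nat \<Rightarrow> real) \<Rightarrow> real"
    and \<alpha> \<gamma> :: real
  assumes n_ge2: "\<forall>i<m. n i \<ge> 2"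
    and P_prob: "prob_space P"
    and P_sets: "sets P = sets (PiM (obs_idx m n) (\<lambda>_. borel))"
    and model: "\<forall>i<m. \<forall>j<n i. integrable P (\<lambda>x. x (i, j)) \<and> (\<integral>x. x (i, j) \<partial>P) = \<mu> i"
    and null_cond: "\<forall>i \<in> {i. i < m \<and> \<mu> i = 0}. \<exists>f :: (nat \<times> nat \<Rightarrow> real) \<Rightarrow> real \<Rightarrow> real.
           (\<lambda>(y, t). f y t) \<in> borel_measurable (PiM (other_idx m n i) (\<lambda>_. borel) \<Otimes>\<^sub>M borel)
         \<and> (\<forall>y \<in> space (PiM (other_idx m n i) (\<lambda>_. borel)).
               (\<forall>t. 0 \<le> f y t \<and> f y (- t) = f y t) \<and> (\<integral>\<^sup>+t. ennreal (f y t) \<partial>lborel) = 1)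
         \<and> P = bind (distr P (PiM (other_idx m n i) (\<lambda>_. borel)) (\<lambda>x. restrict x (other_idx m n i)))
                 (\<lambda>y. distr (PiM {..<n i} (\<lambda>_. density lborel (f y)))
                            (PiM (obs_idx m n) (\<lambda>_. borel)) (combine n i y))"
    and split: "\<forall>s \<in> set_pmf Q. \<forall>i<m. s i \<subseteq> {..<n i} \<and> card (s i) = (n i + 1) div 2"
    and K_sym: "\<forall>t. K (- t) = K t"
    and K_int: "integrable lborel K" "(\<integral>t. K t \<partial>lborel) = 1"
    and K_mom1: "integrable lborel (\<lambda>t. t * K t)" "(\<integral>t. t * K t \<partial>lborel) = 0"
    and K_mom2: "integrable lborel (\<lambda>t. t\<^sup>2 * K t)"
    and h_pos: "\<forall>w. 0 < hsel w" "\<forall>w. 0 < h0sel w"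
    and h_perm: "\<forall>w \<pi>. \<pi> permutes {..<2*m} \<longrightarrow> hsel (w \<circ> \<pi>) = hsel w"
    and h0_perm: "\<forall>w \<pi>. \<pi> permutes {..<2*m} \<longrightarrow> h0sel (w \<circ> \<pi>) = h0sel w"
    and gamma: "0 < \<gamma>" "\<gamma> < 1/2"
    and alpha: "0 < \<alpha>" "\<alpha> < 1"
    and U_neq: "AE \<omega> in P \<Otimes>\<^sub>M measure_pmf Q.
                  \<forall>i<m. SENS_U opt K hsel h0sel \<gamma> n m \<omega> i \<noteq> SENS_U0 opt K hsel h0sel \<gamma> n m \<omega> i"
  shows "(\<integral>\<omega>. (\<Sum>i \<in> {i. i < m \<and> \<mu> i = 0}.
                   sens_e \<alpha> m (SENS_G opt K hsel h0sel \<gamma> n m \<omega>) i) \<partial>(P \<Otimes>\<^sub>M measure_pmf Q)) \<le> real m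
       \<and> (\<integral>\<omega>. FDP (sens_rej \<alpha> m (SENS_G opt K hsel h0sel \<gamma> n m \<omega>)) {i. i < m \<and> \<mu> i = 0}
               \<partial>(P \<Otimes>\<^sub>M measure_pmf Q)) \<le> \<alpha>"
proof -
  define H where "H = {i. i < m \<and> \<mu> i = 0}"
  have H: "H \<subseteq> {..<m}" "\<And>i. i \<in> H \<Longrightarrow> symmetric_given_others m n P i"
    using null_cond by (auto simp: H_def symmetric_given_others_def)
  note integral_le = integral_SENS_G_le[where \<alpha> = \<alpha>, OF _ P_prob P_sets H h_perm h0_perm U_neq]
  have "(\<integral>\<omega>. (\<Sum>i\<in>H. sens_e \<alpha> m (SENS_G opt K hsel h0sel \<gamma> n m \<omega>) i) \<partial>(P \<Otimes>\<^sub>M measure_pmf Q)) \<le> real m"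
    using n_ge2 sum_sens_e_le_null_ratio[OF H(1)] by (intro integral_le) auto
  moreover have "(\<integral>\<omega>. FDP (sens_rej \<alpha> m (SENS_G opt K hsel h0sel \<gamma> n m \<omega>)) H \<partial>(P \<Otimes>\<^sub>M measure_pmf Q)) \<le> \<alpha>"
    using n_ge2 alpha FDP_le_null_ratio[OF H(1)] by (intro integral_le) auto
  ultimately show ?thesis
    by (simp add: H_def)
qed

end
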